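(* Let $-D/2\le x_C<x_B\le D/2$. For $m\in\{B,C\}$ let $r_2^m(r_1)$ denote the boundary function of $\mathcal{C}_f(x_m)$, i.e. $r_2^m(r_1)=\max\{r_2:(r_1,r_2)\in\mathcal{C}_f(x_m)\}$ for $0\le r_1\le r_{1,\max}^m$, where $r_{k,\max}^m=\log_2(1+\bar P h_k(x_m))$. Then the curves $r_2^B(r_1)$ and $r_2^C(r_1)$ have exactly one intersection point $(\bar r_1^{BC},\bar r_2^{BC})$, and it satisfies $0<\bar r_1^{BC}<r_{1,\max}^B$ and $0<\bar r_2^{BC}<r_{2,\max}^C$. Furthermore, $r_2^B(r_1)>r_2^C(r_1)$ for $0\le r_1<\bar r_1^{BC}$, and $r_2^B(r_1)<r_2^C(r_1)$ for $\bar r_1^{BC}<r_1\le r_{1,\max}^B$.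
   Context: Fix $D>0$, $H>0$, $\beta_0>0$, $\bar P>0$. Ground users GU 1, GU 2 are at horizontal positions $x_1=-D/2$, $x_2=D/2$; for a UAV at horizontal position $x$ (altitude $H$), $h_k(x)=\beta_0/((x-x_k)^2+H^2)$. For $p_1,p_2\ge0$, $\mathcal{C}_{\rm MAC}(x,p_1,p_2)$ is the set of $(r_1,r_2)$, $r_1,r_2\ge0$, with $r_1\le\log_2(1+p_1h_1(x))$, $r_2\le\log_2(1+p_2h_2(x))$, $r_1+r_2\le\log_2(1+p_1h_1(x)+p_2h_2(x))$; the fixed-location capacity region is $\mathcal{C}_f(x)=\bigcup_{p_1,p_2\ge0,\,p_1+p_2\le\bar P}\mathcal{C}_{\rm MAC}(x,p_1,p_2)$. *)

theory Defs
  imports Complex_Main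
begin

text \<open>Channel gain from a UAV at horizontal position x (altitude H) to GU k,
  where GU 1 is at -D/2 and GU 2 at D/2.\<close>
definition gu_pos :: "real \<Rightarrow> nat \<Rightarrow> real" where
  "gu_pos D k = (if k = 1 then - D / 2 else D / 2)"

definition gain :: "real \<Rightarrow> real \<Rightarrow> real \<Rightarrow> nat \<Rightarrow> real \<Rightarrow> real" where
  "gain D H \<beta>0 k x = \<beta>0 / ((x - gu_pos D k)\<^sup>2 + H\<^sup>2)"

definition C_MAC :: "real \<Rightarrow> real \<Rightarrow> real \<Rightarrow> real \<Rightarrow> real \<Rightarrow> real \<Rightarrow> (real \<times> real) set" where
  "C_MAC D H \<beta>0 x p1 p2 = {(r1, r2). r1 \<ge> 0 \<and> r2 \<ge> 0 \<and>
      r1 \<le> log 2 (1 + p1 * gain D H \<beta>0 1 x) \<and>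
      r2 \<le> log 2 (1 + p2 * gain D H \<beta>0 2 x) \<and>
      r1 + r2 \<le> log 2 (1 + p1 * gain D H \<beta>0 1 x + p2 * gain D H \<beta>0 2 x)}"

definition C_f :: "real \<Rightarrow> real \<Rightarrow> real \<Rightarrow> real \<Rightarrow> real \<Rightarrow> (real \<times> real) set" where
  "C_f D H \<beta>0 P x = (\<Union>p1 \<in> {0..}. \<Union>p2 \<in> {0..}.
      if p1 + p2 \<le> P then C_MAC D H \<beta>0 x p1 p2 else {})"

definition boundary :: "real \<Rightarrow> real \<Rightarrow> real \<Rightarrow> real \<Rightarrow> real \<Rightarrow> real \<Rightarrow> real" where
  "boundary D H \<beta>0 P x r1 = (GREATEST r2. (r1, r2) \<in> C_f D H \<beta>0 P x)"

definition rmax :: "real \<Rightarrow> real \<Rightarrow> real \<Rightarrow> real \<Rightarrow> nat \<Rightarrow> real \<Rightarrow> real" where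
  "rmax D H \<beta>0 P k x = log 2 (1 + P * gain D H \<beta>0 k x)"

end

theory Submission
  imports Defs
begin

text \<open>Write a = 2^r1 - 1 and b = 2^r2 - 1 for the SNRs needed by the two rates. At a location with
  gains g1, g2 the power-constrained MAC region is then {b \<le> g2 (g1 P - a) / (g1 + min g1 g2 a)}, the
  bound being attained by giving the user with the smaller gain exactly the power its own rate
  needs. Moving the UAV from xC to xB lowers g1 and raises g2; the difference of the two boundaries
  then has the sign of a quadratic in a that is positive at a = 0 and negative at a = g1(xB) P, so it
  changes sign exactly once on that interval, which is the unique crossing.\<close>

text \<open>The constraints of C_MAC in terms of the SNR targets a = 2^r1 - 1 and b = 2^r2 - 1.\<close>
definition snr_feasible :: "real \<Rightarrow> real \<Rightarrow> real \<Rightarrow> real \<Rightarrow> real \<Rightarrow> bool" where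
  "snr_feasible g1 g2 P a b \<longleftrightarrow> (\<exists>p1 p2. 0 \<le> p1 \<and> 0 \<le> p2 \<and> p1 + p2 \<le> P \<and>
     a \<le> p1 * g1 \<and> b \<le> p2 * g2 \<and> (1 + a) * (1 + b) \<le> 1 + p1 * g1 + p2 * g2)"

definition max_snr2 :: "real \<Rightarrow> real \<Rightarrow> real \<Rightarrow> real \<Rightarrow> real" where
  "max_snr2 g1 g2 P a = g2 * (g1 * P - a) / (g1 + min g1 g2 * a)"

lemma snr_feasible_swap:
  assumes "snr_feasible g1 g2 P a b"
  shows "snr_feasible g2 g1 P b a"
proof -
  obtain p1 p2 where "0 \<le> p1" "0 \<le> p2" "p1 + p2 \<le> P" "a \<le> p1 * g1" "b \<le> p2 * g2"
    "(1 + a) * (1 + b) \<le> 1 + p1 * g1 + p2 * g2"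
    using assms unfolding snr_feasible_def by blast
  thus ?thesis
    unfolding snr_feasible_def by (intro exI[of _ p2] exI[of _ p1]) (simp add: algebra_simps)
qed

lemma snr_feasible_iff_ordered:
  assumes g1: "0 < g1" and g12: "g1 \<le> g2" and a: "0 \<le> a" and b: "0 \<le> b"
  shows "snr_feasible g1 g2 P a b \<longleftrightarrow> g2 * a + g1 * b + g1 * a * b \<le> g1 * g2 * P"
proof
  assume "snr_feasible g1 g2 P a b"
  then obtain p1 p2 where p: "0 \<le> p1" "0 \<le> p2" "p1 + p2 \<le> P" "a \<le> p1 * g1"
    and prod: "(1 + a) * (1 + b) \<le> 1 + p1 * g1 + p2 * g2"
    unfolding snr_feasible_def by blast
  have "g2 * a + g1 * b + g1 * a * b \<le> g2 * a + g1 * (p1 * g1 + p2 * g2 - a)"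
    using mult_left_mono[OF prod, of g1] g1 by (simp add: algebra_simps)
  also have "\<dots> = (g2 - g1) * a + g1 * (p1 * g1) + g1 * g2 * p2"
    by (simp add: algebra_simps)
  also have "\<dots> \<le> (g2 - g1) * (p1 * g1) + g1 * (p1 * g1) + g1 * g2 * p2"
    using g12 p(4) by (simp add: mult_left_mono)
  also have "\<dots> = g1 * g2 * (p1 + p2)" by (simp add: algebra_simps)
  also have "\<dots> \<le> g1 * g2 * P"
    using p(3) g1 g12 by (simp add: mult_left_mono)
  finally show "g2 * a + g1 * b + g1 * a * b \<le> g1 * g2 * P" .
next
  assume ineq: "g2 * a + g1 * b + g1 * a * b \<le> g1 * g2 * P"
  \<comment> \<open>user 1, the weaker one, gets exactly the power its own rate needs\<close>
  define p1 where "p1 = a / g1"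
  define p2 where "p2 = P - a / g1"
  have p1g: "p1 * g1 = a" using g1 by (simp add: p1_def)
  have "b * (1 + a) * g1 \<le> g2 * (g1 * P - a)"
    using ineq by (simp add: algebra_simps)
  also have "\<dots> = p2 * g2 * g1" using g1 by (simp add: p2_def field_simps)
  finally have key: "b * (1 + a) \<le> p2 * g2" using g1 by simp
  have "0 \<le> b * (1 + a)" using a b by simp
  hence "0 \<le> p2 * g2" using key by linarith
  hence p2: "0 \<le> p2" using g1 g12 by (simp add: zero_le_mult_iff)
  have "b \<le> b * (1 + a)" using a b by (simp add: algebra_simps)
  hence "b \<le> p2 * g2" using key by linarith
  moreover have "(1 + a) * (1 + b) \<le> 1 + p1 * g1 + p2 * g2"
    using key p1g by (simp add: algebra_simps)
  moreover have "0 \<le> p1" using a g1 by (simp add: p1_def)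
  ultimately show "snr_feasible g1 g2 P a b"
    unfolding snr_feasible_def using p1g p2 by (intro exI[of _ p1] exI[of _ p2]) (simp add: p1_def p2_def)
qed

lemma snr_feasible_iff:
  assumes "0 < g1" "0 < g2" "0 \<le> a" "0 \<le> b"
  shows "snr_feasible g1 g2 P a b \<longleftrightarrow> g2 * a + g1 * b + min g1 g2 * a * b \<le> g1 * g2 * P"
proof (cases "g1 \<le> g2")
  case True
  thus ?thesis using snr_feasible_iff_ordered assms by simp
next
  case False
  hence "snr_feasible g2 g1 P b a \<longleftrightarrow> g1 * b + g2 * a + g2 * b * a \<le> g2 * g1 * P"
    using snr_feasible_iff_ordered assms by simp
  moreover have "snr_feasible g1 g2 P a b \<longleftrightarrow> snr_feasible g2 g1 P b a"
    using snr_feasible_swap by blast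
  ultimately show ?thesis using False by (simp add: algebra_simps)
qed

lemma le_max_snr2_iff:
  assumes "0 < g1" "0 < g2" "0 \<le> a"
  shows "b \<le> max_snr2 g1 g2 P a \<longleftrightarrow> g2 * a + g1 * b + min g1 g2 * a * b \<le> g1 * g2 * P"
proof -
  have "0 < g1 + min g1 g2 * a" using assms by (simp add: add_pos_nonneg)
  hence "b \<le> max_snr2 g1 g2 P a \<longleftrightarrow> b * (g1 + min g1 g2 * a) \<le> g2 * (g1 * P - a)"
    unfolding max_snr2_def by (simp add: pos_le_divide_eq)
  thus ?thesis by (simp add: algebra_simps)
qed

lemma snr_feasible_iff_le_max_snr2:
  assumes "0 < g1" "0 < g2" "0 \<le> a" "0 \<le> b"
  shows "snr_feasible g1 g2 P a b \<longleftrightarrow> b \<le> max_snr2 g1 g2 P a"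
  using snr_feasible_iff le_max_snr2_iff assms by simp

lemma max_snr2_nonneg:
  assumes "0 < g1" "0 < g2" "0 \<le> a" "a \<le> g1 * P"
  shows "0 \<le> max_snr2 g1 g2 P a"
  using le_max_snr2_iff[of g1 g2 a 0 P] assms by (simp add: mult.assoc mult_left_mono)

lemma max_snr2_pos:
  assumes "0 < g1" "0 < g2" "0 \<le> a" "a < g1 * P"
  shows "0 < max_snr2 g1 g2 P a"
  using assms unfolding max_snr2_def by (simp add: add_pos_nonneg)

lemma max_snr2_less:
  assumes "0 < g1" "0 < g2" "0 < P" "0 < a"
  shows "max_snr2 g1 g2 P a < g2 * P"
proof -
  have "0 < g2 * a" "0 < g2 * P * (min g1 g2 * a)" using assms by simp_all
  hence "g2 * (g1 * P - a) < g2 * P * (g1 + min g1 g2 * a)"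
    by (simp add: right_diff_distrib distrib_left)
  thus ?thesis
    using assms unfolding max_snr2_def by (simp add: divide_less_eq add_pos_pos)
qed

lemma gain_pos: "0 < \<beta>0 \<Longrightarrow> 0 < H \<Longrightarrow> 0 < gain D H \<beta>0 k x"
  unfolding gain_def by (simp add: add_nonneg_pos)

lemma le_log2_iff_snr: "0 \<le> c \<Longrightarrow> r \<le> log 2 (1 + c) \<longleftrightarrow> 2 powr r - 1 \<le> c"
  using le_log_iff[of 2 "1 + c" r] by (auto simp: add.commute)

lemma less_log2_iff_snr: "0 \<le> c \<Longrightarrow> r < log 2 (1 + c) \<longleftrightarrow> 2 powr r - 1 < c"
  using less_log_iff[of 2 "1 + c" r] by (auto simp: add.commute)

lemma snr_nonneg: "0 \<le> r \<Longrightarrow> 0 \<le> 2 powr r - (1::real)"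
  by (simp add: ge_one_powr_ge_zero)

lemma snr_pos: "0 < r \<Longrightarrow> 0 < 2 powr r - (1::real)"
  by simp

lemma mem_C_f_iff_snr_feasible:
  assumes "0 < \<beta>0" "0 < H"
  shows "(r1, r2) \<in> C_f D H \<beta>0 P x \<longleftrightarrow> 0 \<le> r1 \<and> 0 \<le> r2 \<and>
    snr_feasible (gain D H \<beta>0 1 x) (gain D H \<beta>0 2 x) P (2 powr r1 - 1) (2 powr r2 - 1)"
proof -
  define g1 where "g1 = gain D H \<beta>0 1 x"
  define g2 where "g2 = gain D H \<beta>0 2 x"
  have g: "0 < g1" "0 < g2" using gain_pos assms by (auto simp: g1_def g2_def)
  have rates_iff: "(r1 \<le> log 2 (1 + p1 * g1) \<and> r2 \<le> log 2 (1 + p2 * g2) \<and>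
      r1 + r2 \<le> log 2 (1 + (p1 * g1 + p2 * g2))) \<longleftrightarrow>
    (2 powr r1 - 1 \<le> p1 * g1 \<and> 2 powr r2 - 1 \<le> p2 * g2 \<and>
      (1 + (2 powr r1 - 1)) * (1 + (2 powr r2 - 1)) \<le> 1 + p1 * g1 + p2 * g2)"
    if "0 \<le> p1" "0 \<le> p2" for p1 p2
    using that g le_log2_iff_snr[of "p1 * g1" r1] le_log2_iff_snr[of "p2 * g2" r2]
      le_log2_iff_snr[of "p1 * g1 + p2 * g2" "r1 + r2"]
    by (auto simp: powr_add add.assoc)
  have "(r1, r2) \<in> C_f D H \<beta>0 P x \<longleftrightarrow> (\<exists>p1 p2. 0 \<le> p1 \<and> 0 \<le> p2 \<and> p1 + p2 \<le> P \<and>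
      (r1, r2) \<in> C_MAC D H \<beta>0 x p1 p2)"
    unfolding C_f_def by (auto split: if_splits)
  also have "\<dots> \<longleftrightarrow> 0 \<le> r1 \<and> 0 \<le> r2 \<and> snr_feasible g1 g2 P (2 powr r1 - 1) (2 powr r2 - 1)"
    unfolding C_MAC_def snr_feasible_def g1_def[symmetric] g2_def[symmetric]
    using rates_iff by (auto simp: add.assoc)
  finally show ?thesis by (simp add: g1_def g2_def)
qed

lemma mem_C_f_iff:
  assumes "0 < \<beta>0" "0 < H"
  shows "(r1, r2) \<in> C_f D H \<beta>0 P x \<longleftrightarrow> 0 \<le> r1 \<and> 0 \<le> r2 \<and>
    2 powr r2 - 1 \<le> max_snr2 (gain D H \<beta>0 1 x) (gain D H \<beta>0 2 x) P (2 powr r1 - 1)"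
  using mem_C_f_iff_snr_feasible[OF assms] snr_feasible_iff_le_max_snr2 gain_pos[OF assms]
    snr_nonneg by blast

lemma le_rmax_iff:
  assumes "0 < \<beta>0" "0 < H" "0 \<le> P"
  shows "r \<le> rmax D H \<beta>0 P k x \<longleftrightarrow> 2 powr r - 1 \<le> P * gain D H \<beta>0 k x"
proof -
  have "0 \<le> P * gain D H \<beta>0 k x"
    by (rule mult_nonneg_nonneg[OF assms(3) less_imp_le[OF gain_pos[OF assms(1,2)]]])
  thus ?thesis unfolding rmax_def by (rule le_log2_iff_snr)
qed

lemma less_rmax_iff:
  assumes "0 < \<beta>0" "0 < H" "0 \<le> P"
  shows "r < rmax D H \<beta>0 P k x \<longleftrightarrow> 2 powr r - 1 < P * gain D H \<beta>0 k x"
proof -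
  have "0 \<le> P * gain D H \<beta>0 k x"
    by (rule mult_nonneg_nonneg[OF assms(3) less_imp_le[OF gain_pos[OF assms(1,2)]]])
  thus ?thesis unfolding rmax_def by (rule less_log2_iff_snr)
qed

lemma boundary_eq:
  assumes "0 < \<beta>0" "0 < H" "0 \<le> P" "0 \<le> r1" "r1 \<le> rmax D H \<beta>0 P 1 x"
  shows "boundary D H \<beta>0 P x r1 =
    log 2 (1 + max_snr2 (gain D H \<beta>0 1 x) (gain D H \<beta>0 2 x) P (2 powr r1 - 1))"
proof -
  define m where "m = max_snr2 (gain D H \<beta>0 1 x) (gain D H \<beta>0 2 x) P (2 powr r1 - 1)"
  have "0 \<le> m"
    using max_snr2_nonneg gain_pos[OF assms(1,2)] snr_nonneg[OF assms(4)]
      le_rmax_iff[OF assms(1-3)] assms(5) unfolding m_def by (simp add: mult.commute)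
  hence "(r1, r2) \<in> C_f D H \<beta>0 P x \<longleftrightarrow> 0 \<le> r2 \<and> r2 \<le> log 2 (1 + m)" for r2
    using mem_C_f_iff[OF assms(1,2)] le_log2_iff_snr assms(4) unfolding m_def by blast
  moreover have "0 \<le> log 2 (1 + m)" using \<open>0 \<le> m\<close> by simp
  ultimately show ?thesis
    unfolding boundary_def m_def[symmetric] by (intro Greatest_equality) auto
qed

lemma boundary_pos:
  assumes "0 < \<beta>0" "0 < H" "0 \<le> P" "0 \<le> r1" "r1 < rmax D H \<beta>0 P 1 x"
  shows "0 < boundary D H \<beta>0 P x r1"
proof -
  have "0 < max_snr2 (gain D H \<beta>0 1 x) (gain D H \<beta>0 2 x) P (2 powr r1 - 1)"
    using max_snr2_pos gain_pos[OF assms(1,2)] snr_nonneg[OF assms(4)]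
      less_rmax_iff[OF assms(1-3)] assms(5) by (simp add: mult.commute)
  thus ?thesis using boundary_eq assms by simp
qed

lemma boundary_less_rmax2:
  assumes "0 < \<beta>0" "0 < H" "0 < P" "0 < r1" "r1 \<le> rmax D H \<beta>0 P 1 x"
  shows "boundary D H \<beta>0 P x r1 < rmax D H \<beta>0 P 2 x"
proof -
  define m where "m = max_snr2 (gain D H \<beta>0 1 x) (gain D H \<beta>0 2 x) P (2 powr r1 - 1)"
  have "m < P * gain D H \<beta>0 2 x"
    using max_snr2_less[OF gain_pos[OF assms(1,2)] gain_pos[OF assms(1,2)] assms(3) snr_pos[OF assms(4)]]
    unfolding m_def by (simp add: mult.commute)
  moreover have "0 \<le> m"
    using max_snr2_nonneg gain_pos[OF assms(1,2)] snr_nonneg assms le_rmax_iff[of \<beta>0 H P]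
    unfolding m_def by (simp add: mult.commute)
  ultimately have "log 2 (1 + m) < rmax D H \<beta>0 P 2 x"
    unfolding rmax_def by simp
  thus ?thesis using boundary_eq assms unfolding m_def by simp
qed

lemma gain1_strict_antimono:
  assumes "0 < \<beta>0" "0 < H" "- D / 2 \<le> x" "x < y"
  shows "gain D H \<beta>0 1 y < gain D H \<beta>0 1 x"
proof -
  have "(x + D / 2)\<^sup>2 < (y + D / 2)\<^sup>2"
    using assms by (intro power_strict_mono) auto
  moreover have "0 < (x + D / 2)\<^sup>2 + H\<^sup>2" using assms by (simp add: add_nonneg_pos)
  ultimately show ?thesis
    using assms unfolding gain_def gu_pos_def by (simp add: divide_strict_left_mono)
qed

lemma gain2_strict_mono:
  assumes "0 < \<beta>0" "0 < H" "x < y" "y \<le> D / 2"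
  shows "gain D H \<beta>0 2 x < gain D H \<beta>0 2 y"
proof -
  have "(D / 2 - y)\<^sup>2 < (D / 2 - x)\<^sup>2"
    using assms by (intro power_strict_mono) auto
  hence "(y - D / 2)\<^sup>2 < (x - D / 2)\<^sup>2" by (simp add: power2_commute)
  moreover have "0 < (y - D / 2)\<^sup>2 + H\<^sup>2" using assms by (simp add: add_nonneg_pos)
  ultimately show ?thesis
    using assms unfolding gain_def gu_pos_def by (simp add: divide_strict_left_mono)
qed

lemma rmax1_strict_antimono:
  assumes "0 < \<beta>0" "0 < H" "0 < P" "- D / 2 \<le> x" "x < y"
  shows "rmax D H \<beta>0 P 1 y < rmax D H \<beta>0 P 1 x"
  using gain1_strict_antimono[OF assms(1,2,4,5)] gain_pos[OF assms(1,2)] assms(3)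
  unfolding rmax_def by (simp add: add_pos_pos)

lemma quadratic_sign_change:
  fixes q :: "real \<Rightarrow> real"
  assumes q: "\<And>t. q t = k0 + k1 * t + k2 * t\<^sup>2" and q0: "0 < q 0" and qL: "q L < 0"
    and L: "0 < L"
  obtains s where "0 < s" "s < L"
    "\<And>t. 0 \<le> t \<Longrightarrow> t \<le> L \<Longrightarrow> 0 < q t \<longleftrightarrow> t < s"
    "\<And>t. 0 \<le> t \<Longrightarrow> t \<le> L \<Longrightarrow> q t < 0 \<longleftrightarrow> s < t"
proof -
  have "continuous_on {0..L} q"
    unfolding q by (intro continuous_intros)
  then obtain s where s: "0 \<le> s" "s \<le> L" "q s = 0"
    using IVT2'[of q L 0 0] q0 qL L by force
  have "0 < s" using s q0 by (cases "s = 0") auto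
  have "s < L" using s qL by (cases "s = L") auto
  define d where "d t = k1 + k2 * (t + s)" for t
  have factor: "q t = (t - s) * d t" for t
  proof -
    have "q t = q t - q s" using s by simp
    also have "\<dots> = (t - s) * d t" unfolding q d_def by (simp add: algebra_simps power2_eq_square)
    finally show ?thesis .
  qed
  \<comment> \<open>d is affine and negative at both ends of [0, L], hence on all of it\<close>
  have "d 0 < 0" using q0 factor[of 0] \<open>0 < s\<close> by (simp add: zero_less_mult_iff mult_less_0_iff)
  moreover have "d L < 0" using qL factor[of L] \<open>s < L\<close> by (simp add: mult_less_0_iff)
  ultimately have d_neg: "d t < 0" if "0 \<le> t" "t \<le> L" for t
    using that mult_left_mono[of t L k2] mult_nonpos_nonneg[of k2 t]
    unfolding d_def by (cases "0 \<le> k2") (auto simp: algebra_simps)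
  show ?thesis
  proof
    fix t assume "0 \<le> t" "t \<le> L"
    thus "0 < q t \<longleftrightarrow> t < s" "q t < 0 \<longleftrightarrow> s < t"
      using factor[of t] d_neg[of t] by (auto simp: zero_less_mult_iff mult_less_0_iff)
  qed fact+
qed

lemma max_snr2_crossing:
  assumes a1: "0 < a1" "a1 < c1" and c2: "0 < c2" "c2 < a2" and P: "0 < P"
  obtains s where "0 < s" "s < a1 * P"
    "\<And>t. 0 \<le> t \<Longrightarrow> t \<le> a1 * P \<Longrightarrow> max_snr2 c1 c2 P t < max_snr2 a1 a2 P t \<longleftrightarrow> t < s"
    "\<And>t. 0 \<le> t \<Longrightarrow> t \<le> a1 * P \<Longrightarrow> max_snr2 a1 a2 P t < max_snr2 c1 c2 P t \<longleftrightarrow> s < t"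
proof -
  define mA where "mA = min a1 a2"
  define mC where "mC = min c1 c2"
  have "0 < mA" "0 < mC" using a1 c2 by (auto simp: mA_def mC_def)
  define q where
    "q t = a2 * (a1 * P - t) * (c1 + mC * t) - c2 * (c1 * P - t) * (a1 + mA * t)" for t
  have den_pos: "0 < (a1 + mA * t) * (c1 + mC * t)" if "0 \<le> t" for t
    using a1 \<open>0 < mA\<close> \<open>0 < mC\<close> that by (simp add: add_pos_nonneg)
  have diff: "max_snr2 a1 a2 P t - max_snr2 c1 c2 P t = q t / ((a1 + mA * t) * (c1 + mC * t))"
    if "0 \<le> t" for t
  proof -
    have "0 < a1 + mA * t" "0 < c1 + mC * t"
      using a1 \<open>0 < mA\<close> \<open>0 < mC\<close> that by (simp_all add: add_pos_nonneg)
    thus ?thesis unfolding max_snr2_def q_def mA_def[symmetric] mC_def[symmetric]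
      by (simp add: field_simps)
  qed
  have "q t = a1 * a2 * c1 * P - a1 * c1 * c2 * P + (a1 * a2 * mC * P - a2 * c1 - c1 * c2 * mA * P + a1 * c2) * t
      + (c2 * mA - a2 * mC) * t\<^sup>2" for t
    unfolding q_def by (simp add: algebra_simps power2_eq_square)
  moreover have "0 < q 0"
    using a1 c2 P unfolding q_def by (simp add: algebra_simps)
  moreover have "q (a1 * P) < 0"
  proof -
    have "q (a1 * P) = - (c2 * (P * (c1 - a1)) * (a1 + mA * (a1 * P)))"
      unfolding q_def by (simp add: algebra_simps)
    moreover have "0 < c2 * (P * (c1 - a1)) * (a1 + mA * (a1 * P))"
      using a1 c2 P \<open>0 < mA\<close> by (simp add: add_pos_pos)
    ultimately show ?thesis by simp
  qed
  ultimately obtain s where s: "0 < s" "s < a1 * P"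
    and "\<And>t. 0 \<le> t \<Longrightarrow> t \<le> a1 * P \<Longrightarrow> 0 < q t \<longleftrightarrow> t < s"
    and "\<And>t. 0 \<le> t \<Longrightarrow> t \<le> a1 * P \<Longrightarrow> q t < 0 \<longleftrightarrow> s < t"
    using quadratic_sign_change[of q] a1 P by (metis mult_pos_pos)
  moreover have "max_snr2 c1 c2 P t < max_snr2 a1 a2 P t \<longleftrightarrow> 0 < q t"
    and "max_snr2 a1 a2 P t < max_snr2 c1 c2 P t \<longleftrightarrow> q t < 0" if "0 \<le> t" for t
    using diff[OF that] den_pos[OF that]
    by (smt (verit) divide_pos_pos zero_less_divide_iff divide_less_0_iff)+
  ultimately show ?thesis using that by blast
qed

lemma boundary_crossing:
  assumes \<beta>0: "0 < \<beta>0" and H: "0 < H" and P: "0 < P"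
    and x: "- D / 2 \<le> xC" "xC < xB" "xB \<le> D / 2"
  obtains r1bar where "0 < r1bar" "r1bar < rmax D H \<beta>0 P 1 xB"
    "\<And>r. 0 \<le> r \<Longrightarrow> r \<le> rmax D H \<beta>0 P 1 xB \<Longrightarrow>
       boundary D H \<beta>0 P xC r < boundary D H \<beta>0 P xB r \<longleftrightarrow> r < r1bar"
    "\<And>r. 0 \<le> r \<Longrightarrow> r \<le> rmax D H \<beta>0 P 1 xB \<Longrightarrow>
       boundary D H \<beta>0 P xB r < boundary D H \<beta>0 P xC r \<longleftrightarrow> r1bar < r"
proof -
  define a1 where "a1 = gain D H \<beta>0 1 xB"
  define a2 where "a2 = gain D H \<beta>0 2 xB"
  define c1 where "c1 = gain D H \<beta>0 1 xC"
  define c2 where "c2 = gain D H \<beta>0 2 xC"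
  have gains: "0 < a1" "0 < a2" "0 < c1" "0 < c2" "a1 < c1" "c2 < a2"
    using gain_pos gain1_strict_antimono gain2_strict_mono \<beta>0 H x
    unfolding a1_def a2_def c1_def c2_def by auto
  then obtain s where s: "0 < s" "s < a1 * P"
    and above: "\<And>t. 0 \<le> t \<Longrightarrow> t \<le> a1 * P \<Longrightarrow> max_snr2 c1 c2 P t < max_snr2 a1 a2 P t \<longleftrightarrow> t < s"
    and below: "\<And>t. 0 \<le> t \<Longrightarrow> t \<le> a1 * P \<Longrightarrow> max_snr2 a1 a2 P t < max_snr2 c1 c2 P t \<longleftrightarrow> s < t"
    using max_snr2_crossing P by blast
  have rmax_le: "rmax D H \<beta>0 P 1 xB \<le> rmax D H \<beta>0 P 1 xC"
    using rmax1_strict_antimono[OF \<beta>0 H P x(1,2)] by simp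
  have t: "0 \<le> 2 powr r - 1" "2 powr r - 1 \<le> a1 * P"
    if "0 \<le> r" "r \<le> rmax D H \<beta>0 P 1 xB" for r
    using that snr_nonneg le_rmax_iff[OF \<beta>0 H, where P=P and r=r and k=1 and x=xB] P
    unfolding a1_def by (auto simp: mult.commute)
  have bB: "boundary D H \<beta>0 P xB r = log 2 (1 + max_snr2 a1 a2 P (2 powr r - 1))"
    if "0 \<le> r" "r \<le> rmax D H \<beta>0 P 1 xB" for r
    using boundary_eq[OF \<beta>0 H _ that] P unfolding a1_def a2_def by simp
  have bC: "boundary D H \<beta>0 P xC r = log 2 (1 + max_snr2 c1 c2 P (2 powr r - 1))"
    if "0 \<le> r" "r \<le> rmax D H \<beta>0 P 1 xB" for r
    using boundary_eq[OF \<beta>0 H _ that(1) order_trans[OF that(2) rmax_le]] P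
    unfolding c1_def c2_def by simp
  have snr2_nonneg: "0 \<le> max_snr2 a1 a2 P t" "0 \<le> max_snr2 c1 c2 P t"
    if "0 \<le> t" "t \<le> a1 * P" for t
  proof -
    have "a1 * P \<le> c1 * P" using gains P by simp
    hence "t \<le> c1 * P" using that(2) by linarith
    thus "0 \<le> max_snr2 c1 c2 P t" using max_snr2_nonneg gains that by simp
    show "0 \<le> max_snr2 a1 a2 P t" using max_snr2_nonneg gains that by simp
  qed
  have log_iff: "log 2 (1 + max_snr2 c1 c2 P t) < log 2 (1 + max_snr2 a1 a2 P t)
      \<longleftrightarrow> max_snr2 c1 c2 P t < max_snr2 a1 a2 P t"
    "log 2 (1 + max_snr2 a1 a2 P t) < log 2 (1 + max_snr2 c1 c2 P t)
      \<longleftrightarrow> max_snr2 a1 a2 P t < max_snr2 c1 c2 P t"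
    if "0 \<le> t" "t \<le> a1 * P" for t
    using snr2_nonneg[OF that] by simp_all
  show ?thesis
  proof
    show "0 < log 2 (1 + s)" using s by simp
    show "log 2 (1 + s) < rmax D H \<beta>0 P 1 xB"
      using s less_rmax_iff[OF \<beta>0 H] P less_log2_iff_snr unfolding a1_def
      by (simp add: mult.commute)
  next
    fix r assume r: "0 \<le> r" "r \<le> rmax D H \<beta>0 P 1 xB"
    show "boundary D H \<beta>0 P xC r < boundary D H \<beta>0 P xB r \<longleftrightarrow> r < log 2 (1 + s)"
      using bB[OF r] bC[OF r] log_iff[OF t[OF r]] above[OF t[OF r]] less_log2_iff_snr[of s r] s
      by simp
    show "boundary D H \<beta>0 P xB r < boundary D H \<beta>0 P xC r \<longleftrightarrow> log 2 (1 + s) < r"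
      using bB[OF r] bC[OF r] log_iff[OF t[OF r]] below[OF t[OF r]] le_log2_iff_snr[of s r] s
      by (simp add: not_le[symmetric])
  qed
qed

theorem lemma6:
  fixes D H \<beta>0 P xB xC :: real
  assumes "D > 0" and "H > 0" and "\<beta>0 > 0" and "P > 0"
    and "- D / 2 \<le> xC" and "xC < xB" and "xB \<le> D / 2"
  shows "\<exists>r1bar r2bar.
     0 \<le> r1bar \<and> r1bar \<le> rmax D H \<beta>0 P 1 xB \<and>
     r2bar = boundary D H \<beta>0 P xB r1bar \<and> r2bar = boundary D H \<beta>0 P xC r1bar \<and>
     (\<forall>r1. 0 \<le> r1 \<and> r1 \<le> rmax D H \<beta>0 P 1 xB \<and>
            boundary D H \<beta>0 P xB r1 = boundary D H \<beta>0 P xC r1 \<longrightarrow> r1 = r1bar) \<and>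
     0 < r1bar \<and> r1bar < rmax D H \<beta>0 P 1 xB \<and>
     0 < r2bar \<and> r2bar < rmax D H \<beta>0 P 2 xC \<and>
     (\<forall>r1. 0 \<le> r1 \<and> r1 < r1bar \<longrightarrow>
            boundary D H \<beta>0 P xB r1 > boundary D H \<beta>0 P xC r1) \<and>
     (\<forall>r1. r1bar < r1 \<and> r1 \<le> rmax D H \<beta>0 P 1 xB \<longrightarrow>
            boundary D H \<beta>0 P xB r1 < boundary D H \<beta>0 P xC r1)"
proof -
  note \<beta>0 = \<open>\<beta>0 > 0\<close> and H = \<open>H > 0\<close> and P = \<open>P > 0\<close>
  obtain r1bar where pos: "0 < r1bar" and lt: "r1bar < rmax D H \<beta>0 P 1 xB"
    and above: "\<And>r. 0 \<le> r \<Longrightarrow> r \<le> rmax D H \<beta>0 P 1 xB \<Longrightarrow>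
       boundary D H \<beta>0 P xC r < boundary D H \<beta>0 P xB r \<longleftrightarrow> r < r1bar"
    and below: "\<And>r. 0 \<le> r \<Longrightarrow> r \<le> rmax D H \<beta>0 P 1 xB \<Longrightarrow>
       boundary D H \<beta>0 P xB r < boundary D H \<beta>0 P xC r \<longleftrightarrow> r1bar < r"
    using boundary_crossing[OF \<beta>0 H P assms(5-7)] by blast
  have eq: "boundary D H \<beta>0 P xB r1bar = boundary D H \<beta>0 P xC r1bar"
    using above[of r1bar] below[of r1bar] pos lt by fastforce
  have "r1bar \<le> rmax D H \<beta>0 P 1 xC"
    using lt rmax1_strict_antimono[OF \<beta>0 H P assms(5,6)] by simp
  hence "boundary D H \<beta>0 P xC r1bar < rmax D H \<beta>0 P 2 xC"
    using boundary_less_rmax2[OF \<beta>0 H P pos] by blast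
  moreover have "0 < boundary D H \<beta>0 P xB r1bar"
    using boundary_pos[OF \<beta>0 H] P pos lt by simp
  moreover have "r = r1bar"
    if "0 \<le> r" "r \<le> rmax D H \<beta>0 P 1 xB" "boundary D H \<beta>0 P xB r = boundary D H \<beta>0 P xC r" for r
    using above[OF that(1,2)] below[OF that(1,2)] that(3) by auto
  ultimately show ?thesis
    using eq pos lt above below by (intro exI[of _ r1bar] exI[of _ "boundary D H \<beta>0 P xB r1bar"]) auto
qed

end
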